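(* Let $-1<p<0$, $a>0$, $\gamma>0$ and $\mu,d>0$. Then $\mathcal{I}(\mu,d)>-\infty$.
   Context: For real-valued $u\in H^1(\mathbb{R})\cap L^{p+2}(\mathbb{R})$ and $v\in L^2(\mathbb{R})\cap L^4(\mathbb{R})$ set \[ \tau(u,v)=\frac{2a}{p+2}\int_{\mathbb{R}}|u|^{p+2}+\int_{\mathbb{R}}vu^2+\frac{\gamma}{4}\int_{\mathbb{R}}v^4, \] \[ X_{\mu,d}=\{(u,v)\in (H^1\cap L^{p+2})\times(L^2\cap L^4):\ N_d(u,v):=\|u\|_2^2+\|u'\|_2^2+d\|v\|_2^2=\mu\}, \] and $\mathcal{I}(\mu,d)=\inf\{\tau(u,v):(u,v)\in X_{\mu,d}\}$. *)

theory Defs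
  imports "HOL-Analysis.Analysis"
begin

text \<open>Real-valued Lebesgue space L^q(R), 0 < q, as a set of functions (representatives).\<close>
definition Lp :: "real \<Rightarrow> (real \<Rightarrow> real) set" where
  "Lp q = {u. u \<in> borel_measurable lborel \<and> integrable lborel (\<lambda>x. \<bar>u x\<bar> powr q)}"

definition Lnorm2sq :: "(real \<Rightarrow> real) \<Rightarrow> real" where
  "Lnorm2sq u = (\<integral>x. (u x)\<^sup>2 \<partial>lborel)"

definition test_fun :: "(real \<Rightarrow> real) \<Rightarrow> bool" where
  "test_fun \<phi> \<longleftrightarrow> (\<forall>k::nat. \<forall>x. ((deriv ^^ k) \<phi>) differentiable (at x))
                    \<and> bounded {x. \<phi> x \<noteq> 0}"

definition weak_deriv :: "(real \<Rightarrow> real) \<Rightarrow> (real \<Rightarrow> real) \<Rightarrow> bool" where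
  "weak_deriv u w \<longleftrightarrow> (\<forall>\<phi>. test_fun \<phi> \<longrightarrow>
      (\<integral>x. u x * deriv \<phi> x \<partial>lborel) = - (\<integral>x. w x * \<phi> x \<partial>lborel))"

definition H1 :: "(real \<Rightarrow> real) set" where
  "H1 = {u. u \<in> Lp 2 \<and> (\<exists>w. w \<in> Lp 2 \<and> weak_deriv u w)}"

definition tau :: "real \<Rightarrow> real \<Rightarrow> real \<Rightarrow> (real \<Rightarrow> real) \<Rightarrow> (real \<Rightarrow> real) \<Rightarrow> real" where
  "tau a p \<gamma> u v = 2 * a / (p + 2) * (\<integral>x. \<bar>u x\<bar> powr (p + 2) \<partial>lborel)
      + (\<integral>x. v x * (u x)\<^sup>2 \<partial>lborel) + \<gamma> / 4 * (\<integral>x. (v x) ^ 4 \<partial>lborel)"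

text \<open>The constraint set X_{mu,d}; ||u'||_2 is computed with a weak derivative w of u
  (unique a.e., so the value does not depend on the choice).\<close>
definition Xset :: "real \<Rightarrow> real \<Rightarrow> real \<Rightarrow> ((real \<Rightarrow> real) \<times> (real \<Rightarrow> real)) set" where
  "Xset p \<mu> d = {(u, v). u \<in> H1 \<and> u \<in> Lp (p + 2) \<and> v \<in> Lp 2 \<and> v \<in> Lp 4 \<and>
      (\<exists>w. w \<in> Lp 2 \<and> weak_deriv u w \<and> Lnorm2sq u + Lnorm2sq w + d * Lnorm2sq v = \<mu>)}"

definition Imin :: "real \<Rightarrow> real \<Rightarrow> real \<Rightarrow> real \<Rightarrow> real \<Rightarrow> ereal" where
  "Imin a p \<gamma> \<mu> d = (INF uv \<in> Xset p \<mu> d. ereal (tau a p \<gamma> (fst uv) (snd uv)))"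

end

theory Submission
  imports Defs "HOL-Computational_Algebra.Polynomial"
begin

text \<open>Only the middle term \<open>\<integral> v u\<^sup>2\<close> of \<open>tau\<close> can be negative. Functions in \<open>H\<^sup>1(\<real>)\<close> are
  bounded: by the du Bois-Reymond lemma, \<open>u\<close> agrees almost everywhere with \<open>c + \<integral>\<^sub>0\<^sup>x u'\<close>, and
  averaging over \<open>[x, x + 1]\<close> gives \<open>\<bar>u x\<bar> \<le> 1 + (\<parallel>u\<parallel>\<^sub>2\<^sup>2 + \<parallel>u'\<parallel>\<^sub>2\<^sup>2) / 2 \<le> 1 + \<mu>\<close>.
  Hence \<open>\<integral> v u\<^sup>2 \<ge> - \<parallel>u\<parallel>\<^sub>\<infinity> (\<parallel>v\<parallel>\<^sub>2\<^sup>2 + \<parallel>u\<parallel>\<^sub>2\<^sup>2) / 2\<close>, which the constraint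
  \<open>N\<^sub>d(u, v) = \<mu>\<close> bounds from below uniformly.\<close>

section \<open>Smooth functions\<close>

definition differentiable_upto :: "nat \<Rightarrow> (real \<Rightarrow> real) \<Rightarrow> bool" where
  "differentiable_upto k f \<longleftrightarrow> (\<forall>j\<le>k. \<forall>x. (deriv ^^ j) f differentiable (at x))"

definition smooth :: "(real \<Rightarrow> real) \<Rightarrow> bool" where
  "smooth f \<longleftrightarrow> (\<forall>k. differentiable_upto k f)"

lemma smooth_iff_deriv_funpow_differentiable:
  "smooth f \<longleftrightarrow> (\<forall>k x. (deriv ^^ k) f differentiable (at x))"
  by (auto simp: smooth_def differentiable_upto_def)

lemma differentiable_upto_0: "differentiable_upto 0 f \<longleftrightarrow> (\<forall>x. f differentiable (at x))"
  by (simp add: differentiable_upto_def)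

lemma differentiable_upto_Suc: "differentiable_upto (Suc k) f \<longleftrightarrow> (\<forall>x. f differentiable (at x)) \<and> differentiable_upto k (deriv f)"
proof
  assume "differentiable_upto (Suc k) f"
  then show "(\<forall>x. f differentiable (at x)) \<and> differentiable_upto k (deriv f)"
    unfolding differentiable_upto_def by (metis Suc_le_mono funpow_0 funpow_Suc_right o_apply zero_le)
next
  assume H: "(\<forall>x. f differentiable (at x)) \<and> differentiable_upto k (deriv f)"
  show "differentiable_upto (Suc k) f"
    unfolding differentiable_upto_def
  proof (intro allI impI)
    fix j x assume "j \<le> Suc k"
    then show "(deriv ^^ j) f differentiable (at x)"
      using H unfolding differentiable_upto_def by (cases j) (auto simp del: funpow.simps simp: funpow_Suc_right)
  qed
qed

lemma differentiable_upto_mono: "differentiable_upto k f \<Longrightarrow> j \<le> k \<Longrightarrow> differentiable_upto j f"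
  by (auto simp: differentiable_upto_def)

lemma differentiable_upto_const: "differentiable_upto k (\<lambda>x. c)"
  by (induction k arbitrary: c) (auto simp: differentiable_upto_0 differentiable_upto_Suc)

lemma differentiable_upto_add: "differentiable_upto k f \<Longrightarrow> differentiable_upto k g \<Longrightarrow> differentiable_upto k (\<lambda>x. f x + g x)"
proof (induction k arbitrary: f g)
  case (Suc k)
  then have "\<And>x. (f has_real_derivative deriv f x) (at x)"
    "\<And>x. (g has_real_derivative deriv g x) (at x)"
    by (auto simp: differentiable_upto_Suc DERIV_deriv_iff_real_differentiable)
  then have "deriv (\<lambda>x. f x + g x) = (\<lambda>x. deriv f x + deriv g x)"
    by (intro ext DERIV_imp_deriv) (auto intro!: derivative_eq_intros)
  with Suc show ?case by (auto simp: differentiable_upto_Suc)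
qed (auto simp: differentiable_upto_0)

lemma differentiable_upto_mult: "differentiable_upto k f \<Longrightarrow> differentiable_upto k g \<Longrightarrow> differentiable_upto k (\<lambda>x. f x * g x)"
proof (induction k arbitrary: f g)
  case (Suc k)
  then have "\<And>x. (f has_real_derivative deriv f x) (at x)"
    "\<And>x. (g has_real_derivative deriv g x) (at x)"
    by (auto simp: differentiable_upto_Suc DERIV_deriv_iff_real_differentiable)
  then have "deriv (\<lambda>x. f x * g x) = (\<lambda>x. deriv f x * g x + f x * deriv g x)"
    by (intro ext DERIV_imp_deriv) (auto intro!: derivative_eq_intros)
  moreover have "differentiable_upto k (\<lambda>x. deriv f x * g x + f x * deriv g x)"
    using Suc differentiable_upto_mono[of "Suc k" _ k] by (intro differentiable_upto_add) (auto simp: differentiable_upto_Suc)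
  ultimately show ?case using Suc by (auto simp: differentiable_upto_Suc)
qed (auto simp: differentiable_upto_0)

lemma DERIV_affine_comp:
  assumes "f differentiable (at (a * x + b))"
  shows "((\<lambda>x. f (a * x + b)) has_real_derivative a * deriv f (a * x + b)) (at x)"
proof -
  have "(f has_real_derivative deriv f (a * x + b)) (at (a * x + b))"
    using assms by (simp add: DERIV_deriv_iff_real_differentiable)
  moreover have "((\<lambda>x. a * x + b) has_real_derivative a) (at x)"
    by (auto intro!: derivative_eq_intros)
  ultimately have "((\<lambda>x. f (a * x + b)) has_real_derivative deriv f (a * x + b) * a) (at x)"
    by (rule DERIV_chain2)
  then show ?thesis by (simp only: mult.commute)
qed

lemma differentiable_upto_affine_comp: "differentiable_upto k f \<Longrightarrow> differentiable_upto k (\<lambda>x. f (a * x + b))"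
proof (induction k arbitrary: f)
  case 0
  then have "((\<lambda>x. f (a * x + b)) has_real_derivative a * deriv f (a * x + b)) (at x)"
    for x by (intro DERIV_affine_comp) (simp add: differentiable_upto_0)
  then show ?case by (auto simp: differentiable_upto_0 real_differentiable_def)
next
  case (Suc k)
  then have D: "((\<lambda>x. f (a * x + b)) has_real_derivative a * deriv f (a * x + b)) (at x)"
    for x by (intro DERIV_affine_comp) (simp add: differentiable_upto_Suc)
  then have "deriv (\<lambda>x. f (a * x + b)) = (\<lambda>x. a * deriv f (a * x + b))"
    by (auto intro!: DERIV_imp_deriv)
  moreover have "\<And>x. (\<lambda>x. f (a * x + b)) differentiable (at x)"
    using D by (auto simp: real_differentiable_def)
  moreover have "differentiable_upto k (\<lambda>x. a * deriv f (a * x + b))"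
    using Suc by (intro differentiable_upto_mult differentiable_upto_const) (auto simp: differentiable_upto_Suc)
  ultimately show ?case by (auto simp: differentiable_upto_Suc)
qed

lemma smooth_add: "smooth f \<Longrightarrow> smooth g \<Longrightarrow> smooth (\<lambda>x. f x + g x)"
  and smooth_mult: "smooth f \<Longrightarrow> smooth g \<Longrightarrow> smooth (\<lambda>x. f x * g x)"
  and smooth_affine_comp: "smooth f \<Longrightarrow> smooth (\<lambda>x. f (a * x + b))"
  and smooth_const: "smooth (\<lambda>x. c)"
  by (auto simp: smooth_def differentiable_upto_add differentiable_upto_mult differentiable_upto_affine_comp differentiable_upto_const)

lemma smooth_iff_deriv: "smooth f \<longleftrightarrow> (\<forall>x. f differentiable (at x)) \<and> smooth (deriv f)"
  by (metis differentiable_upto_Suc differentiable_upto_mono le_add2 plus_1_eq_Suc smooth_def)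

lemma smooth_DERIV: "smooth f \<Longrightarrow> (f has_real_derivative deriv f x) (at x)"
  using smooth_iff_deriv DERIV_deriv_iff_real_differentiable by blast

lemma smooth_continuous_on: "smooth f \<Longrightarrow> continuous_on S f"
  by (meson DERIV_isCont continuous_at_imp_continuous_on smooth_DERIV)

lemma smooth_borel_measurable: "smooth f \<Longrightarrow> f \<in> borel_measurable borel"
  by (simp add: borel_measurable_continuous_onI smooth_continuous_on)

section \<open>A smooth bump function\<close>

lemma tendsto_power_mult_poly_mult_exp_at_top:
  "((\<lambda>t::real. t ^ n * poly P t * exp (- t)) \<longlongrightarrow> 0) at_top"
proof (induction P arbitrary: n)
  case (pCons a P)
  have "((\<lambda>t::real. a * (t ^ n / exp t) + t ^ Suc n * poly P t * exp (- t)) \<longlongrightarrow> a * 0 + 0) at_top"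
    by (intro tendsto_intros tendsto_power_div_exp_0 pCons.IH)
  then show ?case by (simp add: exp_minus field_simps)
qed simp

text \<open>Every derivative of the function equal to \<open>exp (- 1 / x)\<close> for \<open>x > 0\<close> and to \<open>0\<close>
  otherwise has the form \<open>exp_inv_poly P\<close>, and differentiation acts on \<open>P\<close> as
  \<open>exp_inv_poly_deriv\<close>.\<close>

definition exp_inv_poly :: "real poly \<Rightarrow> real \<Rightarrow> real" where
  "exp_inv_poly P x = (if x > 0 then poly P (1 / x) * exp (- (1 / x)) else 0)"

definition exp_inv_poly_deriv :: "real poly \<Rightarrow> real poly" where
  "exp_inv_poly_deriv P = [:0, 0, 1:] * (P - pderiv P)"

lemma has_real_derivative_exp_inv_poly_0: "(exp_inv_poly P has_real_derivative 0) (at 0)"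
proof -
  have "((\<lambda>y. exp_inv_poly P y / y) \<longlongrightarrow> 0) (at_left 0)"
    by (rule tendsto_eventually)
      (auto simp: eventually_at_left_field exp_inv_poly_def intro!: exI[of _ "-1"])
  moreover have "((\<lambda>y. exp_inv_poly P y / y) \<longlongrightarrow> 0) (at_right 0)"
  proof -
    have "((\<lambda>y. inverse y ^ 1 * poly P (inverse y) * exp (- inverse y)) \<longlongrightarrow> 0) (at_right 0)"
      using filterlim_compose[OF tendsto_power_mult_poly_mult_exp_at_top[of 1 P]
          filterlim_inverse_at_top_right] by (simp add: o_def)
    then show ?thesis
      by (rule tendsto_cong[THEN iffD1, rotated])
        (auto simp: eventually_at_right_field exp_inv_poly_def divide_simps intro: exI[of _ 1])
  qed
  ultimately have "((\<lambda>y. (exp_inv_poly P y - exp_inv_poly P 0) / (y - 0)) \<longlongrightarrow> 0) (at 0)"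
    by (simp add: filterlim_at_split exp_inv_poly_def)
  then show ?thesis by (simp add: has_field_derivative_iff)
qed

lemma has_real_derivative_exp_inv_poly:
  "(exp_inv_poly P has_real_derivative exp_inv_poly (exp_inv_poly_deriv P) x) (at x)"
proof -
  consider "x > 0" | "x < 0" | "x = 0" by linarith
  then show ?thesis
  proof cases
    case 1
    have "((\<lambda>y. poly P (1 / y) * exp (- (1 / y))) has_real_derivative
        poly (pderiv P) (1 / x) * (- 1 / x\<^sup>2) * exp (- (1 / x))
          + poly P (1 / x) * (exp (- (1 / x)) * (1 / x\<^sup>2))) (at x)"
      using 1 by (auto intro!: derivative_eq_intros DERIV_chain2[OF poly_DERIV]
          simp: power2_eq_square field_simps)
    also have "poly (pderiv P) (1 / x) * (- 1 / x\<^sup>2) * exp (- (1 / x))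
          + poly P (1 / x) * (exp (- (1 / x)) * (1 / x\<^sup>2))
        = exp_inv_poly (exp_inv_poly_deriv P) x"
      using 1 by (simp add: exp_inv_poly_def exp_inv_poly_deriv_def power2_eq_square
          field_simps)
    finally show ?thesis
      by (rule has_field_derivative_transform_within_open[of _ _ _ "{0<..}"])
        (use 1 in \<open>auto simp: exp_inv_poly_def\<close>)
  next
    case 2
    have "((\<lambda>y. 0) has_real_derivative exp_inv_poly (exp_inv_poly_deriv P) x) (at x)"
      using 2 by (simp add: exp_inv_poly_def)
    then show ?thesis
      by (rule has_field_derivative_transform_within_open[of _ _ _ "{..<0}"])
        (use 2 in \<open>auto simp: exp_inv_poly_def\<close>)
  next
    case 3
    then show ?thesis
      using has_real_derivative_exp_inv_poly_0 by (simp add: exp_inv_poly_def)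
  qed
qed

lemma smooth_exp_inv_poly: "smooth (exp_inv_poly P)"
proof -
  have "differentiable_upto k (exp_inv_poly P)" for k
  proof (induction k arbitrary: P)
    case 0
    then show ?case
      using has_real_derivative_exp_inv_poly
      by (auto simp: differentiable_upto_0 real_differentiable_def)
  next
    case (Suc k)
    have "deriv (exp_inv_poly P) = exp_inv_poly (exp_inv_poly_deriv P)"
      using has_real_derivative_exp_inv_poly by (auto intro!: DERIV_imp_deriv)
    with Suc show ?case
      using has_real_derivative_exp_inv_poly
      by (auto simp: differentiable_upto_Suc real_differentiable_def)
  qed
  then show ?thesis by (simp add: smooth_def)
qed

definition bump :: "real \<Rightarrow> real" where
  "bump x = exp_inv_poly 1 x * exp_inv_poly 1 (1 - x)"

lemma smooth_bump: "smooth bump"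
  using smooth_affine_comp[OF smooth_exp_inv_poly, of 1 "-1" 1]
  unfolding bump_def by (intro smooth_mult smooth_exp_inv_poly) simp

lemma bump_pos: "0 < x \<Longrightarrow> x < 1 \<Longrightarrow> bump x > 0"
  and bump_nonneg: "bump x \<ge> 0"
  and bump_eq_0: "x \<le> 0 \<or> x \<ge> 1 \<Longrightarrow> bump x = 0"
  by (auto simp: bump_def exp_inv_poly_def)

section \<open>Test functions with prescribed support\<close>

lemma continuous_vanishing_outside_interval_eq_0:
  fixes f :: "real \<Rightarrow> real"
  assumes "continuous_on UNIV f" and "\<And>x. x < A \<or> x > B \<Longrightarrow> f x = 0"
    and "x \<le> A \<or> x \<ge> B"
  shows "f x = 0"
proof -
  have "closure ({..<A} \<union> {B<..}) \<subseteq> {x. f x = 0}"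
    using assms(1,2) by (intro closure_minimal closed_Collect_eq) auto
  then show ?thesis using assms(3) by auto
qed

lemma continuous_vanishing_outside_interval_integrable:
  fixes f :: "real \<Rightarrow> real"
  assumes "continuous_on UNIV f" and "\<And>x. x < A \<or> x > B \<Longrightarrow> f x = 0"
  shows "integrable lborel f" and "(\<integral>x. f x \<partial>lborel) = integral {A..B} f"
proof -
  have si: "set_integrable lborel {A..B} f"
    by (rule borel_integrable_atLeastAtMost') (rule continuous_on_subset[OF assms(1)], auto)
  have "(\<lambda>x. indicator {A..B} x *\<^sub>R f x) = f"
    using assms(2) by (force simp: indicator_def)
  then show "integrable lborel f" and "(\<integral>x. f x \<partial>lborel) = integral {A..B} f"
    using si set_borel_integral_eq_integral(2)[OF si]
    by (simp_all add: set_integrable_def set_lebesgue_integral_def)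
qed

lemma continuous_vanishing_outside_interval_bounded:
  fixes f :: "real \<Rightarrow> real"
  assumes "continuous_on UNIV f" and "\<And>x. x < A \<or> x > B \<Longrightarrow> f x = 0"
  obtains M where "\<And>x. \<bar>f x\<bar> \<le> M"
proof -
  have "bounded (f ` {A..B})"
    by (intro compact_imp_bounded compact_continuous_image continuous_on_subset[OF assms(1)])
      auto
  then obtain M where "\<And>x. x \<in> {A..B} \<Longrightarrow> \<bar>f x\<bar> \<le> M"
    unfolding bounded_iff by (metis image_eqI real_norm_def)
  then have "\<bar>f x\<bar> \<le> max M 0" for x
    using assms(2)[of x] by (cases "x < A \<or> x > B") (auto simp: le_max_iff_disj)
  then show ?thesis by (rule that)
qed

lemma has_real_derivative_integral_from:
  fixes f :: "real \<Rightarrow> real"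
  assumes cont: "continuous_on UNIV f" and "\<And>x. x \<le> A \<Longrightarrow> f x = 0"
  shows "((\<lambda>y. integral {A..y} f) has_real_derivative f x) (at x)"
proof -
  define L where "L = min A x - 1"
  have int: "f integrable_on {a..b}" for a b
    by (rule integrable_continuous_interval, rule continuous_on_subset[OF cont]) auto
  have zero: "integral {L..y} f = 0" if "y \<le> A" for y
    using assms(2) that by (subst integral_cong[where g = "\<lambda>_. 0"]) auto
  have "integral {L..y} f = integral {A..y} f" for y
  proof (cases "y \<le> A")
    case False
    then have "integral {L..A} f + integral {A..y} f = integral {L..y} f"
      by (intro Henstock_Kurzweil_Integration.integral_combine int) (auto simp: L_def)
    then show ?thesis using zero[of A] by simp
  qed (use zero in \<open>cases "y = A", auto\<close>)
  moreover have "((\<lambda>y. integral {L..y} f) has_real_derivative f x) (at x within {L..x+1})"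
    by (rule integral_has_real_derivative) (auto simp: L_def intro: continuous_on_subset[OF cont])
  moreover have "at x within {L..x+1} = at x"
    by (rule at_within_interior) (auto simp: L_def)
  ultimately show ?thesis by simp
qed

definition test_fun_in :: "(real \<Rightarrow> real) \<Rightarrow> real \<Rightarrow> real \<Rightarrow> bool" where
  "test_fun_in \<phi> A B \<longleftrightarrow> smooth \<phi> \<and> (\<forall>x. x < A \<or> x > B \<longrightarrow> \<phi> x = 0)"

lemma test_fun_in_imp_test_fun: "test_fun_in \<phi> A B \<Longrightarrow> test_fun \<phi>"
proof -
  assume h: "test_fun_in \<phi> A B"
  then have "{x. \<phi> x \<noteq> 0} \<subseteq> {A..B}" by (force simp: test_fun_in_def)
  then have "bounded {x. \<phi> x \<noteq> 0}" by (rule bounded_subset[OF bounded_closed_interval])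
  with h show "test_fun \<phi>"
    by (simp add: test_fun_def test_fun_in_def smooth_iff_deriv_funpow_differentiable)
qed

lemma test_fun_imp_test_fun_in: "test_fun \<phi> \<Longrightarrow> \<exists>R. test_fun_in \<phi> (-R) R"
proof -
  assume h: "test_fun \<phi>"
  then obtain R where "\<And>x. \<phi> x \<noteq> 0 \<Longrightarrow> \<bar>x\<bar> \<le> R"
    unfolding test_fun_def bounded_iff by auto
  then have "\<phi> x = 0" if "x < -R \<or> x > R" for x using that by force
  with h show ?thesis
    by (auto simp: test_fun_in_def test_fun_def smooth_iff_deriv_funpow_differentiable)
qed

lemma test_fun_in_mono: "test_fun_in \<phi> A B \<Longrightarrow> A' \<le> A \<Longrightarrow> B \<le> B' \<Longrightarrow> test_fun_in \<phi> A' B'"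
  by (auto simp: test_fun_in_def)

lemma test_fun_in_deriv:
  assumes "test_fun_in \<phi> A B"
  shows "test_fun_in (deriv \<phi>) A B"
proof -
  have "deriv \<phi> x = 0" if x: "x < A \<or> x > B" for x
  proof -
    let ?S = "if x < A then {..<A} else {B<..}"
    have "(\<phi> has_real_derivative 0) (at x)"
      by (rule has_field_derivative_transform_within_open[of "\<lambda>_. 0" _ _ ?S])
        (use assms x in \<open>auto simp: test_fun_in_def split: if_splits\<close>)
    then show ?thesis by (rule DERIV_imp_deriv)
  qed
  with assms show ?thesis by (auto simp: test_fun_in_def smooth_iff_deriv[of \<phi>])
qed

lemma test_fun_in_integrable: "test_fun_in \<phi> A B \<Longrightarrow> integrable lborel \<phi>"
  and integral_test_fun_in: "test_fun_in \<phi> A B \<Longrightarrow> (\<integral>x. \<phi> x \<partial>lborel) = integral {A..B} \<phi>"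
  using continuous_vanishing_outside_interval_integrable[of \<phi> A B]
  by (auto simp: test_fun_in_def smooth_continuous_on)

definition locally_integrable :: "(real \<Rightarrow> real) \<Rightarrow> bool" where
  "locally_integrable g \<longleftrightarrow>
    g \<in> borel_measurable lborel \<and> (\<forall>a b. set_integrable lborel {a..b} g)"

lemma integrable_indicator_Icc: "integrable lborel (indicator {a..b} :: real \<Rightarrow> real)"
  by (intro integrable_real_indicator) (simp_all add: emeasure_lborel_Icc_eq)

lemma integrable_mult_test_fun_in:
  assumes g: "locally_integrable g" and \<phi>: "test_fun_in \<phi> A B"
  shows "integrable lborel (\<lambda>x. g x * \<phi> x)"
proof -
  have cont: "continuous_on UNIV \<phi>" and vanish: "\<And>x. x < A \<or> x > B \<Longrightarrow> \<phi> x = 0"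
    using \<phi> by (auto simp: test_fun_in_def smooth_continuous_on)
  obtain M where M: "\<And>x. \<bar>\<phi> x\<bar> \<le> M"
    using continuous_vanishing_outside_interval_bounded[OF cont vanish] by blast
  show ?thesis
  proof (rule Bochner_Integration.integrable_bound)
    show "integrable lborel (\<lambda>x. M * (indicator {A..B} x *\<^sub>R g x))"
      using g unfolding locally_integrable_def set_integrable_def by simp
    show "(\<lambda>x. g x * \<phi> x) \<in> borel_measurable lborel"
      using g \<phi> by (intro borel_measurable_times)
        (simp_all add: locally_integrable_def test_fun_in_def smooth_borel_measurable)
    have "norm (g x * \<phi> x) \<le> norm (M * (indicator {A..B} x *\<^sub>R g x))" for x
      using M[of x] vanish[of x] mult_left_mono[OF M[of x], of "\<bar>g x\<bar>"]
      by (cases "x < A \<or> x > B") (auto simp: abs_mult mult.commute)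
    then show "AE x in lborel. norm (g x * \<phi> x) \<le> norm (M * (indicator {A..B} x *\<^sub>R g x))"
      by simp
  qed
qed

lemma test_fun_in_integral_from:
  assumes \<phi>: "test_fun_in \<phi> A B" and "(\<integral>x. \<phi> x \<partial>lborel) = 0" and "A \<le> B"
  shows "test_fun_in (\<lambda>y. integral {A..y} \<phi>) A B" and "deriv (\<lambda>y. integral {A..y} \<phi>) = \<phi>"
proof -
  have cont: "continuous_on UNIV \<phi>" and vanish: "\<And>x. x < A \<or> x > B \<Longrightarrow> \<phi> x = 0"
    using \<phi> by (auto simp: test_fun_in_def smooth_continuous_on)
  have vanish_closed: "x \<le> A \<or> x \<ge> B \<Longrightarrow> \<phi> x = 0" for x
    using continuous_vanishing_outside_interval_eq_0[OF cont vanish] by blast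
  have D: "((\<lambda>y. integral {A..y} \<phi>) has_real_derivative \<phi> x) (at x)" for x
    by (rule has_real_derivative_integral_from[OF cont]) (use vanish_closed in auto)
  then show deriv_eq: "deriv (\<lambda>y. integral {A..y} \<phi>) = \<phi>"
    by (auto intro!: DERIV_imp_deriv)
  have "integral {A..y} \<phi> = 0" if "y > B" for y
  proof -
    have int: "\<phi> integrable_on {A..y}"
      by (rule integrable_continuous_interval, rule continuous_on_subset[OF cont]) auto
    have "integral {A..B} \<phi> + integral {B..y} \<phi> = integral {A..y} \<phi>"
      by (rule Henstock_Kurzweil_Integration.integral_combine) (use that assms(3) int in auto)
    moreover have "integral {B..y} \<phi> = 0"
      using vanish_closed by (subst integral_cong[where g = "\<lambda>_. 0"]) auto
    ultimately show ?thesis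
      using integral_test_fun_in[OF \<phi>] assms(2) by simp
  qed
  moreover have "smooth (\<lambda>y. integral {A..y} \<phi>)"
    using D deriv_eq \<phi> smooth_iff_deriv[of "\<lambda>y. integral {A..y} \<phi>"]
    by (auto simp: test_fun_in_def real_differentiable_def)
  ultimately show "test_fun_in (\<lambda>y. integral {A..y} \<phi>) A B"
    by (auto simp: test_fun_in_def)
qed

section \<open>The du Bois-Reymond lemma\<close>

definition bump_integral :: real where
  "bump_integral = (\<integral>x. bump x \<partial>lborel)"

lemma test_fun_in_bump: "test_fun_in bump 0 1"
  using smooth_bump bump_eq_0 by (auto simp: test_fun_in_def)

lemma bump_integral_eq: "bump_integral = integral {0..1} bump"
  using integral_test_fun_in[OF test_fun_in_bump] by (simp add: bump_integral_def)

lemma bump_integral_pos: "bump_integral > 0"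
proof -
  have cont: "continuous_on {0..1} bump" by (rule smooth_continuous_on[OF smooth_bump])
  have "integral {0..1} bump \<ge> 0"
    by (rule integral_nonneg) (use cont integrable_continuous_interval bump_nonneg in auto)
  moreover have "integral {0..1} bump \<noteq> 0"
    using integral_eq_0_iff[OF cont] bump_nonneg bump_pos[of "1/2"] by force
  ultimately show ?thesis by (simp add: bump_integral_eq)
qed

text \<open>If \<open>g\<close> has weak derivative \<open>0\<close>, then \<open>\<integral> g \<phi>\<close> only depends on \<open>\<integral> \<phi>\<close>:
  subtracting the right multiple of \<open>bump\<close> from \<open>\<phi>\<close> leaves the derivative of a test function.\<close>

lemma weak_deriv_zero_integral_mult:
  assumes g: "locally_integrable g" and g': "weak_deriv g (\<lambda>_. 0)"
    and \<phi>: "test_fun_in \<phi> A B"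
  shows "(\<integral>x. g x * \<phi> x \<partial>lborel)
    = (\<integral>x. g x * bump x \<partial>lborel) / bump_integral * (\<integral>x. \<phi> x \<partial>lborel)"
proof -
  define A' where "A' = min A 0"
  define B' where "B' = max B 1"
  have \<phi>': "test_fun_in \<phi> A' B'" and bump': "test_fun_in bump A' B'"
    by (rule test_fun_in_mono[OF \<phi>] test_fun_in_mono[OF test_fun_in_bump];
        simp add: A'_def B'_def)+
  define c where "c = (\<integral>x. \<phi> x \<partial>lborel) / bump_integral"
  define \<psi> where "\<psi> = (\<lambda>x. \<phi> x + (- c) * bump x)"
  have "smooth \<psi>"
    using \<phi>' unfolding \<psi>_def test_fun_in_def
    by (intro smooth_add smooth_mult smooth_const smooth_bump) simp
  with \<phi>' bump' have "test_fun_in \<psi> A' B'"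
    by (simp add: \<psi>_def test_fun_in_def)
  moreover have "(\<integral>x. \<psi> x \<partial>lborel) = 0"
    using test_fun_in_integrable[OF \<phi>'] test_fun_in_integrable[OF bump'] bump_integral_pos
    by (simp add: \<psi>_def c_def bump_integral_def)
  ultimately obtain \<Psi> where "test_fun \<Psi>" and "deriv \<Psi> = \<psi>"
    using test_fun_in_integral_from[of \<psi> A' B'] test_fun_in_imp_test_fun
    by (metis A'_def B'_def max.coboundedI2 min.coboundedI2 zero_le_one)
  then have "0 = (\<integral>x. g x * \<psi> x \<partial>lborel)"
    using g' unfolding weak_deriv_def by auto
  also have "\<dots> = (\<integral>x. g x * \<phi> x \<partial>lborel) - c * (\<integral>x. g x * bump x \<partial>lborel)"
    using integrable_mult_test_fun_in[OF g \<phi>'] integrable_mult_test_fun_in[OF g bump']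
    by (simp add: \<psi>_def algebra_simps)
  finally show ?thesis by (simp add: c_def)
qed

definition smooth_step :: "real \<Rightarrow> real" where
  "smooth_step x = integral {0..x} bump / bump_integral"

lemma smooth_smooth_step: "smooth smooth_step"
  and smooth_step_eq_0: "x \<le> 0 \<Longrightarrow> smooth_step x = 0"
  and smooth_step_eq_1: "x \<ge> 1 \<Longrightarrow> smooth_step x = 1"
  and smooth_step_nonneg: "0 \<le> smooth_step x"
  and smooth_step_le_1: "smooth_step x \<le> 1"
proof -
  have cont: "continuous_on UNIV bump" by (rule smooth_continuous_on[OF smooth_bump])
  have D: "(smooth_step has_real_derivative bump y * (1 / bump_integral)) (at y)" for y
    unfolding smooth_step_def
    using has_real_derivative_integral_from[OF cont, of 0 y] bump_eq_0
    by (auto intro!: derivative_eq_intros simp: divide_inverse)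
  then have "deriv smooth_step = (\<lambda>y. bump y * (1 / bump_integral))"
    by (auto intro!: DERIV_imp_deriv)
  moreover have "smooth (\<lambda>y. bump y * (1 / bump_integral))"
    by (intro smooth_mult smooth_bump smooth_const)
  ultimately show "smooth smooth_step"
    using D smooth_iff_deriv[of smooth_step] by (auto simp: real_differentiable_def)
  show "x \<le> 0 \<Longrightarrow> smooth_step x = 0" by (cases "x = 0") (auto simp: smooth_step_def)
  have int: "bump integrable_on {a..b}" for a b
    by (rule integrable_continuous_interval, rule continuous_on_subset[OF cont]) auto
  show eq_1: "x \<ge> 1 \<Longrightarrow> smooth_step x = 1"
  proof -
    assume x: "x \<ge> 1"
    have "integral {0..1} bump + integral {1..x} bump = integral {0..x} bump"
      by (rule Henstock_Kurzweil_Integration.integral_combine) (use x int in auto)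
    moreover have "integral {1..x} bump = 0"
      using bump_eq_0 by (subst integral_cong[where g = "\<lambda>_. 0"]) auto
    ultimately show ?thesis
      using bump_integral_eq bump_integral_pos by (simp add: smooth_step_def)
  qed
  show "0 \<le> smooth_step x"
    unfolding smooth_step_def using bump_integral_pos
    by (intro divide_nonneg_pos integral_nonneg int bump_nonneg) auto
  show "smooth_step x \<le> 1"
  proof (cases "x \<ge> 1")
    case False
    then have "integral {0..x} bump \<le> integral {0..1} bump"
      by (intro integral_subset_le int) (auto simp: bump_nonneg)
    then show ?thesis using bump_integral_eq bump_integral_pos by (simp add: smooth_step_def)
  qed (simp add: eq_1)
qed

definition cutoff :: "real \<Rightarrow> real \<Rightarrow> nat \<Rightarrow> real \<Rightarrow> real" where
  "cutoff a b n x = smooth_step (real (Suc n) * (x - a)) * smooth_step (real (Suc n) * (b - x))"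

lemma test_fun_in_cutoff: "test_fun_in (cutoff a b n) a b"
proof -
  have "cutoff a b n = (\<lambda>x. smooth_step (real (Suc n) * x + - real (Suc n) * a)
      * smooth_step ((- real (Suc n)) * x + real (Suc n) * b))"
    by (auto simp: cutoff_def algebra_simps)
  then have "smooth (cutoff a b n)"
    by (simp add: smooth_mult smooth_affine_comp smooth_smooth_step)
  moreover have "cutoff a b n x = 0" if "x < a \<or> x > b" for x
    using that by (auto simp: cutoff_def mult_nonneg_nonpos intro!: smooth_step_eq_0)
  ultimately show ?thesis by (simp add: test_fun_in_def)
qed

lemma abs_cutoff_le_indicator: "\<bar>cutoff a b n x\<bar> \<le> indicator {a..b} x"
proof (cases "x \<in> {a..b}")
  case True
  then show ?thesis
    using smooth_step_nonneg smooth_step_le_1 by (simp add: cutoff_def abs_mult mult_le_one)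
next
  case False
  then show ?thesis using test_fun_in_cutoff[of a b n] by (auto simp: test_fun_in_def)
qed

lemma cutoff_LIMSEQ: "(\<lambda>n. cutoff a b n x) \<longlonglongrightarrow> indicator {a<..<b} x"
proof (cases "a < x \<and> x < b")
  case True
  define e where "e = min (x - a) (b - x)"
  have "e > 0" using True by (simp add: e_def)
  then obtain N where N: "1 / e < real N" using reals_Archimedean2 by blast
  have "cutoff a b n x = 1" if "n \<ge> N" for n
  proof -
    have "1 < real N * e" using N \<open>e > 0\<close> by (simp add: field_simps)
    also have "\<dots> \<le> real (Suc n) * e" using that \<open>e > 0\<close> by (intro mult_right_mono) auto
    finally have "1 \<le> real (Suc n) * (x - a)" "1 \<le> real (Suc n) * (b - x)"
      by (smt (verit) e_def min.cobounded1 min.cobounded2 mult_left_mono of_nat_0_le_iff)+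
    then show ?thesis by (simp add: cutoff_def smooth_step_eq_1)
  qed
  then have "(\<lambda>n. cutoff a b n x) \<longlonglongrightarrow> 1"
    by (intro tendsto_eventually) (auto simp: eventually_sequentially)
  with True show ?thesis by simp
next
  case False
  then have "cutoff a b n x = 0" for n
    by (auto simp: cutoff_def mult_nonneg_nonpos intro!: smooth_step_eq_0)
  with False show ?thesis by simp
qed

lemma weak_deriv_zero_interval_integral:
  assumes g: "locally_integrable g" and g': "weak_deriv g (\<lambda>_. 0)" and "a < b"
  shows "(\<integral>x. indicator {a<..<b} x * g x \<partial>lborel)
    = (\<integral>x. g x * bump x \<partial>lborel) / bump_integral * (b - a)"
proof -
  define c where "c = (\<integral>x. g x * bump x \<partial>lborel) / bump_integral"
  have g_meas: "g \<in> borel_measurable lborel"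
    and g_int: "integrable lborel (\<lambda>x. indicator {a..b} x * g x)"
    using g by (simp_all add: locally_integrable_def set_integrable_def)
  have cutoff_meas: "cutoff a b n \<in> borel_measurable lborel" for n
    using test_fun_in_cutoff by (simp add: test_fun_in_def smooth_borel_measurable)
  have "(\<lambda>n. \<integral>x. g x * cutoff a b n x \<partial>lborel)
      \<longlonglongrightarrow> (\<integral>x. indicator {a<..<b} x * g x \<partial>lborel)"
  proof (rule integral_dominated_convergence[where w = "\<lambda>x. \<bar>indicator {a..b} x * g x\<bar>"])
    show "AE x in lborel. norm (g x * cutoff a b n x) \<le> \<bar>indicator {a..b} x * g x\<bar>" for n
      using mult_left_mono[OF abs_cutoff_le_indicator] by (simp add: abs_mult mult.commute)
    show "AE x in lborel. (\<lambda>n. g x * cutoff a b n x) \<longlonglongrightarrow> indicator {a<..<b} x * g x"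
      using tendsto_mult_left[OF cutoff_LIMSEQ] by (simp add: mult.commute)
  qed (use g_meas cutoff_meas g_int in \<open>simp_all add: borel_measurable_times\<close>)
  moreover have "(\<lambda>n. \<integral>x. cutoff a b n x \<partial>lborel) \<longlonglongrightarrow> (\<integral>x. indicator {a<..<b} x \<partial>lborel)"
  proof (rule integral_dominated_convergence[where w = "indicator {a..b}"])
    show "AE x in lborel. norm (cutoff a b n x) \<le> indicator {a..b} x" for n
      using abs_cutoff_le_indicator by simp
  qed (use cutoff_meas cutoff_LIMSEQ integrable_indicator_Icc in simp_all)
  then have "(\<lambda>n. c * (\<integral>x. cutoff a b n x \<partial>lborel)) \<longlonglongrightarrow> c * (b - a)"
    using \<open>a < b\<close> by (intro tendsto_mult_left) (simp add: measure_lborel_Ioo)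
  then have "(\<lambda>n. \<integral>x. g x * cutoff a b n x \<partial>lborel) \<longlonglongrightarrow> c * (b - a)"
    using weak_deriv_zero_integral_mult[OF g g' test_fun_in_cutoff] by (simp add: c_def)
  ultimately show ?thesis by (simp add: c_def LIMSEQ_unique)
qed

text \<open>The positive and negative parts of \<open>h\<close> have densities giving the same measure to every
  ray \<open>{y<..}\<close>, hence the same measure; so they agree almost everywhere.\<close>

lemma AE_zero_if_integral_greaterThan_zero:
  fixes h :: "real \<Rightarrow> real"
  assumes h: "integrable lborel h" and zero: "\<And>y. (\<integral>x. indicator {y<..} x * h x \<partial>lborel) = 0"
  shows "AE x in lborel. h x = 0"
proof -
  have [measurable]: "h \<in> borel_measurable lborel" using h by simp
  define M1 where "M1 = density lborel (\<lambda>x. ennreal (h x))"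
  define M2 where "M2 = density lborel (\<lambda>x. ennreal (- h x))"
  have int: "integrable lborel (\<lambda>x. indicator {y<..} x * h x)" for y
    using integrable_mult_indicator[OF _ h, of "{y<..}"] by simp
  have M1_eq: "emeasure M1 {y<..} = (\<integral>\<^sup>+x. ennreal (indicator {y<..} x * h x) \<partial>lborel)" for y
    unfolding M1_def by (subst emeasure_density) (auto intro!: nn_integral_cong simp: indicator_def)
  have M2_eq: "emeasure M2 {y<..} = (\<integral>\<^sup>+x. ennreal (- (indicator {y<..} x * h x)) \<partial>lborel)" for y
    unfolding M2_def by (subst emeasure_density) (auto intro!: nn_integral_cong simp: indicator_def)
  have nn_finite: "(\<integral>\<^sup>+x. ennreal (f x) \<partial>lborel) < \<infinity>" if "integrable lborel f" for f
  proof -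
    have "(\<integral>\<^sup>+x. ennreal (f x) \<partial>lborel) \<le> (\<integral>\<^sup>+x. ennreal (norm (f x)) \<partial>lborel)"
      by (intro nn_integral_mono ennreal_leI) simp
    also have "\<dots> < \<infinity>" using that by (simp add: integrable_iff_bounded)
    finally show ?thesis .
  qed
  have finite: "emeasure M1 {y<..} < \<infinity>" "emeasure M2 {y<..} < \<infinity>" for y
    using nn_finite[OF int] nn_finite[OF integrable_minus[OF int]] by (simp_all add: M1_eq M2_eq)
  have "enn2real (emeasure M1 {y<..}) = enn2real (emeasure M2 {y<..})" for y
    using real_lebesgue_integral_def[OF int[of y]] zero[of y] M1_eq M2_eq by simp
  then have "emeasure M1 {y<..} = emeasure M2 {y<..}" for y
    using finite[of y] by (metis ennreal_enn2real infinity_ennreal_def)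
  then have "M1 = M2"
    using finite by (intro measure_eqI_lessThan) (simp_all add: M1_def M2_def)
  then have "AE x in lborel. ennreal (h x) = ennreal (- h x)"
    unfolding M1_def M2_def by (intro sigma_finite_measure.density_unique[OF sigma_finite_lborel]) auto
  then show ?thesis
    by (rule eventually_mono) (smt (verit) ennreal_eq_0_iff ennreal_neg)
qed

lemma locally_integrable_integrable_Ioo:
  assumes "locally_integrable f"
  shows "integrable lborel (\<lambda>x. indicator {a<..<b} x * f x)"
proof -
  have "integrable lborel (\<lambda>x. indicator {a<..<b} x * (indicator {a..b} x * f x))"
    using assms integrable_mult_indicator[of "{a<..<b}" lborel "\<lambda>x. indicator {a..b} x * f x"]
    by (simp add: locally_integrable_def set_integrable_def)
  also have "(\<lambda>x. indicator {a<..<b} x * (indicator {a..b} x * f x))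
      = (\<lambda>x. indicator {a<..<b} x * f x :: real)"
    by (auto simp: indicator_def)
  finally show ?thesis .
qed

lemma locally_integrable_integrable_indicator_abs:
  "locally_integrable f \<Longrightarrow> integrable lborel (\<lambda>t. indicator {a..b} t * \<bar>f t\<bar>)"
  using integrable_abs[of lborel "\<lambda>t. indicator {a..b} t * f t"]
  by (simp add: locally_integrable_def set_integrable_def abs_mult)

lemma AE_zero_if_interval_integrals_zero:
  fixes h :: "real \<Rightarrow> real"
  assumes h: "locally_integrable h"
    and zero: "\<And>a b. a < b \<Longrightarrow> (\<integral>x. indicator {a<..<b} x * h x \<partial>lborel) = 0"
  shows "AE x in lborel. h x = 0"
proof -
  have "AE x in lborel. indicator {- real n<..<real n} x * h x = 0" for n
  proof (rule AE_zero_if_integral_greaterThan_zero)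
    show "integrable lborel (\<lambda>x. indicator {- real n<..<real n} x * h x)"
      using h by (rule locally_integrable_integrable_Ioo)
    fix y
    show "(\<integral>x. indicator {y<..} x * (indicator {- real n<..<real n} x * h x) \<partial>lborel) = 0"
    proof (cases "max y (- real n) < real n")
      case True
      have "(\<lambda>x. indicator {y<..} x * (indicator {- real n<..<real n} x * h x))
          = (\<lambda>x. indicator {max y (- real n)<..<real n} x * h x)"
        by (auto simp: indicator_def)
      then show ?thesis using zero[OF True] by simp
    next
      case False
      then have "(\<lambda>x. indicator {y<..} x * (indicator {- real n<..<real n} x * h x)) = (\<lambda>x. 0)"
        by (auto simp: indicator_def)
      then show ?thesis by simp
    qed
  qed
  then have "AE x in lborel. \<forall>n. indicator {- real n<..<real n} x * h x = 0"
    unfolding AE_all_countable by blast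
  then show ?thesis
  proof (rule eventually_mono)
    fix x :: real
    obtain n where "\<bar>x\<bar> < real n" using reals_Archimedean2 by blast
    then show "\<forall>n. indicator {- real n<..<real n} x * h x = 0 \<Longrightarrow> h x = 0"
      by (auto simp: indicator_def dest!: spec[of _ n])
  qed
qed

lemma weak_deriv_zero_imp_AE_const:
  assumes g: "locally_integrable g" and g': "weak_deriv g (\<lambda>_. 0)"
  shows "\<exists>c. AE x in lborel. g x = c"
proof -
  define c where "c = (\<integral>x. g x * bump x \<partial>lborel) / bump_integral"
  have const: "locally_integrable (\<lambda>_. c)"
    by (auto simp: locally_integrable_def intro!: borel_integrable_atLeastAtMost')
  have "locally_integrable (\<lambda>x. g x - c)"
    using g const by (auto simp: locally_integrable_def)
  moreover have "(\<integral>x. indicator {a<..<b} x * (g x - c) \<partial>lborel) = 0" if "a < b" for a b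
  proof -
    have "(\<integral>x. indicator {a<..<b} x * (g x - c) \<partial>lborel)
        = (\<integral>x. indicator {a<..<b} x * g x \<partial>lborel) - (\<integral>x. indicator {a<..<b} x * c \<partial>lborel)"
      using locally_integrable_integrable_Ioo[OF g] locally_integrable_integrable_Ioo[OF const]
      by (simp add: right_diff_distrib)
    also have "\<dots> = c * (b - a) - (b - a) * c"
      using weak_deriv_zero_interval_integral[OF g g' that] that
      by (simp add: c_def measure_lborel_Ioo)
    finally show ?thesis by simp
  qed
  ultimately have "AE x in lborel. g x - c = 0"
    by (rule AE_zero_if_interval_integrals_zero)
  then show ?thesis by auto
qed

section \<open>Primitives of locally integrable functions\<close>

lemma integral_Ioo_deriv_test_fun_in:
  assumes \<phi>: "test_fun_in \<phi> A B" and "a \<le> b"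
  shows "(\<integral>x. indicator {a<..<b} x * deriv \<phi> x \<partial>lborel) = \<phi> b - \<phi> a"
proof -
  have sm: "smooth \<phi>" using \<phi> by (simp add: test_fun_in_def)
  have "interval_lebesgue_integral lborel (ereal a) (ereal b) (deriv \<phi>) = \<phi> b - \<phi> a"
  proof (rule interval_integral_FTC_finite)
    show "continuous_on {min a b..max a b} (deriv \<phi>)"
      using sm by (simp add: smooth_iff_deriv[of \<phi>] smooth_continuous_on)
    show "(\<phi> has_vector_derivative deriv \<phi> x) (at x within {min a b..max a b})" for x
      using smooth_DERIV[OF sm, of x]
      by (simp add: has_real_derivative_iff_has_vector_derivative has_vector_derivative_at_within)
  qed
  moreover have "{x. a < x \<and> x < b} = {a<..<b}" by auto
  ultimately show ?thesis
    using \<open>a \<le> b\<close>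
    by (simp add: interval_lebesgue_integral_def set_lebesgue_integral_def einterval_def)
qed

text \<open>\<open>primitive w x\<close> is the oriented integral of \<open>w\<close> from \<open>0\<close> to \<open>x\<close>.\<close>

definition prim_kernel :: "real \<Rightarrow> real \<Rightarrow> real" where
  "prim_kernel x t = (if 0 < t \<and> t < x then 1 else if x < t \<and> t < 0 then -1 else 0)"

definition primitive :: "(real \<Rightarrow> real) \<Rightarrow> real \<Rightarrow> real" where
  "primitive w x = (\<integral>t. w t * prim_kernel x t \<partial>lborel)"

lemma abs_prim_kernel_le_indicator: "\<bar>x\<bar> \<le> R \<Longrightarrow> \<bar>prim_kernel x t\<bar> \<le> indicator {-R..R} t"
  by (auto simp: prim_kernel_def indicator_def)

lemma abs_prim_kernel_diff_le_indicator:
  "x \<le> y \<Longrightarrow> \<bar>prim_kernel y t - prim_kernel x t\<bar> \<le> indicator {x..y} t"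
  by (auto simp: prim_kernel_def indicator_def)

lemma integral_deriv_mult_prim_kernel:
  assumes \<phi>: "test_fun_in \<phi> A B" and "t \<noteq> 0"
  shows "(\<integral>x. deriv \<phi> x * prim_kernel x t \<partial>lborel) = - \<phi> t"
proof -
  define L where "L = min A t - 1"
  define T where "T = max B t + 1"
  have vanish: "\<phi> L = 0" "\<phi> T = 0"
    using \<phi> by (auto simp: test_fun_in_def L_def T_def)
  have deriv_vanish: "deriv \<phi> x = 0" if "x \<le> L \<or> x \<ge> T" for x
    using test_fun_in_deriv[OF \<phi>] that by (auto simp: test_fun_in_def L_def T_def)
  consider "t > 0" | "t < 0" using \<open>t \<noteq> 0\<close> by linarith
  then show ?thesis
  proof cases
    case 1
    then have "(\<lambda>x. deriv \<phi> x * prim_kernel x t) = (\<lambda>x. indicator {t<..<T} x * deriv \<phi> x)"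
      using deriv_vanish by (force simp: prim_kernel_def indicator_def)
    then show ?thesis
      using integral_Ioo_deriv_test_fun_in[OF \<phi>, of t T] vanish by (simp add: T_def)
  next
    case 2
    then have "(\<lambda>x. deriv \<phi> x * prim_kernel x t) = (\<lambda>x. - (indicator {L<..<t} x * deriv \<phi> x))"
      using deriv_vanish by (force simp: prim_kernel_def indicator_def)
    then show ?thesis
      using integral_Ioo_deriv_test_fun_in[OF \<phi>, of L t] vanish by (simp add: L_def)
  qed
qed

lemma integrable_mult_prim_kernel:
  assumes "locally_integrable w"
  shows "integrable lborel (\<lambda>t. w t * prim_kernel x t)"
proof (rule Bochner_Integration.integrable_bound)
  show "integrable lborel (\<lambda>t. \<bar>indicator {-\<bar>x\<bar>..\<bar>x\<bar>} t * w t\<bar>)"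
    using assms by (intro integrable_abs) (simp add: locally_integrable_def set_integrable_def)
  have [measurable]: "w \<in> borel_measurable lborel"
    using assms by (simp add: locally_integrable_def)
  show "(\<lambda>t. w t * prim_kernel x t) \<in> borel_measurable lborel"
    unfolding prim_kernel_def by measurable
  show "AE t in lborel. norm (w t * prim_kernel x t) \<le> norm \<bar>indicator {-\<bar>x\<bar>..\<bar>x\<bar>} t * w t\<bar>"
    using mult_left_mono[OF abs_prim_kernel_le_indicator[of x "\<bar>x\<bar>"], of "\<bar>w _\<bar>"]
    by (simp add: abs_mult mult.commute)
qed

lemma borel_measurable_primitive:
  assumes "w \<in> borel_measurable lborel"
  shows "primitive w \<in> borel_measurable lborel"
proof -
  have [measurable]: "w \<in> borel_measurable lborel" by (rule assms)
  have "(\<lambda>(x, t). w t * prim_kernel x t) \<in> borel_measurable (lborel \<Otimes>\<^sub>M lborel)"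
    unfolding prim_kernel_def by measurable
  then show ?thesis
    unfolding primitive_def[abs_def]
    using lborel.borel_measurable_lebesgue_integral[of "\<lambda>x t. w t * prim_kernel x t"] by simp
qed

lemma abs_primitive_diff_le:
  assumes w: "locally_integrable w" and "x \<le> y"
  shows "\<bar>primitive w y - primitive w x\<bar> \<le> (\<integral>t. indicator {x..y} t * \<bar>w t\<bar> \<partial>lborel)"
proof -
  have "primitive w y - primitive w x = (\<integral>t. w t * (prim_kernel y t - prim_kernel x t) \<partial>lborel)"
    unfolding primitive_def
    using integrable_mult_prim_kernel[OF w, of x] integrable_mult_prim_kernel[OF w, of y]
    by (simp add: right_diff_distrib)
  also have "\<bar>\<dots>\<bar> \<le> (\<integral>t. \<bar>w t * (prim_kernel y t - prim_kernel x t)\<bar> \<partial>lborel)"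
    by (rule integral_abs_bound)
  also have "\<dots> \<le> (\<integral>t. indicator {x..y} t * \<bar>w t\<bar> \<partial>lborel)"
  proof (rule integral_mono)
    show "integrable lborel (\<lambda>t. \<bar>w t * (prim_kernel y t - prim_kernel x t)\<bar>)"
      using integrable_mult_prim_kernel[OF w, of x] integrable_mult_prim_kernel[OF w, of y]
      by (intro integrable_abs) (simp add: right_diff_distrib)
    show "integrable lborel (\<lambda>t. indicator {x..y} t * \<bar>w t\<bar>)"
      using w by (rule locally_integrable_integrable_indicator_abs)
    show "\<bar>w t * (prim_kernel y t - prim_kernel x t)\<bar> \<le> indicator {x..y} t * \<bar>w t\<bar>" for t
      using mult_left_mono[OF abs_prim_kernel_diff_le_indicator[OF \<open>x \<le> y\<close>], of "\<bar>w t\<bar>" t]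
      by (simp add: abs_mult mult.commute)
  qed
  finally show ?thesis .
qed

lemma abs_primitive_le:
  assumes w: "locally_integrable w" and "\<bar>x\<bar> \<le> R"
  shows "\<bar>primitive w x\<bar> \<le> (\<integral>t. indicator {-R..R} t * \<bar>w t\<bar> \<partial>lborel)"
proof -
  have "\<bar>primitive w x\<bar> \<le> (\<integral>t. \<bar>w t * prim_kernel x t\<bar> \<partial>lborel)"
    unfolding primitive_def by (rule integral_abs_bound)
  also have "\<dots> \<le> (\<integral>t. indicator {-R..R} t * \<bar>w t\<bar> \<partial>lborel)"
  proof (rule integral_mono)
    show "integrable lborel (\<lambda>t. \<bar>w t * prim_kernel x t\<bar>)"
      by (intro integrable_abs integrable_mult_prim_kernel w)
    show "integrable lborel (\<lambda>t. indicator {-R..R} t * \<bar>w t\<bar>)"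
      using w by (rule locally_integrable_integrable_indicator_abs)
    show "\<bar>w t * prim_kernel x t\<bar> \<le> indicator {-R..R} t * \<bar>w t\<bar>" for t
      using mult_left_mono[OF abs_prim_kernel_le_indicator[OF \<open>\<bar>x\<bar> \<le> R\<close>], of "\<bar>w t\<bar>" t]
      by (simp add: abs_mult mult.commute)
  qed
  finally show ?thesis .
qed

lemma locally_integrable_primitive:
  assumes w: "locally_integrable w"
  shows "locally_integrable (primitive w)"
  unfolding locally_integrable_def
proof (intro conjI allI)
  show meas: "primitive w \<in> borel_measurable lborel"
    using w borel_measurable_primitive[of w] by (simp add: locally_integrable_def)
  fix a b :: real
  define C where "C = (\<integral>t. indicator {-max \<bar>a\<bar> \<bar>b\<bar>..max \<bar>a\<bar> \<bar>b\<bar>} t * \<bar>w t\<bar> \<partial>lborel)"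
  show "set_integrable lborel {a..b} (primitive w)"
    unfolding set_integrable_def
  proof (rule Bochner_Integration.integrable_bound)
    show "integrable lborel (\<lambda>x. C * indicator {a..b} x)"
      using integrable_indicator_Icc by (intro integrable_mult_right)
    show "(\<lambda>x. indicator {a..b} x *\<^sub>R primitive w x) \<in> borel_measurable lborel"
      using meas by measurable
    have "C \<ge> 0" unfolding C_def by (intro Bochner_Integration.integral_nonneg) simp
    then have "norm (indicator {a..b} x *\<^sub>R primitive w x) \<le> norm (C * indicator {a..b} x)" for x
      using abs_primitive_le[OF w, of x "max \<bar>a\<bar> \<bar>b\<bar>"] by (auto simp: C_def indicator_def)
    then show "AE x in lborel. norm (indicator {a..b} x *\<^sub>R primitive w x) \<le> norm (C * indicator {a..b} x)"
      by simp
  qed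
qed

lemma integrable_lborel_pair_mult:
  fixes f g :: "real \<Rightarrow> real"
  assumes f: "integrable lborel f" and g: "integrable lborel g"
  shows "integrable (lborel \<Otimes>\<^sub>M lborel) (\<lambda>(x, t). f x * g t)"
proof (rule lborel_pair.Fubini_integrable)
  have [measurable]: "f \<in> borel_measurable lborel" "g \<in> borel_measurable lborel"
    using f g by simp_all
  show "(\<lambda>(x, t). f x * g t) \<in> borel_measurable (lborel \<Otimes>\<^sub>M lborel)" by measurable
  show "AE x in lborel. integrable lborel (\<lambda>t. case (x, t) of (x, t) \<Rightarrow> f x * g t)"
    using g by simp
  show "integrable lborel (\<lambda>x. \<integral>t. norm (case (x, t) of (x, t) \<Rightarrow> f x * g t) \<partial>lborel)"
    using f by (simp add: abs_mult)
qed

lemma integrable_pair_deriv_mult_prim_kernel: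
  assumes \<phi>: "test_fun_in \<phi> (-R) R" and w: "locally_integrable w"
  shows "integrable (lborel \<Otimes>\<^sub>M lborel) (\<lambda>(x, t). deriv \<phi> x * (w t * prim_kernel x t))"
proof (rule Bochner_Integration.integrable_bound)
  have \<phi>': "test_fun_in (deriv \<phi>) (-R) R" by (rule test_fun_in_deriv[OF \<phi>])
  have [measurable]: "w \<in> borel_measurable lborel" "deriv \<phi> \<in> borel_measurable lborel"
    using w \<phi>' by (simp_all add: locally_integrable_def test_fun_in_def smooth_borel_measurable)
  show "integrable (lborel \<Otimes>\<^sub>M lborel) (\<lambda>(x, t). \<bar>deriv \<phi> x\<bar> * \<bar>indicator {-R..R} t * w t\<bar>)"
    using w test_fun_in_integrable[OF \<phi>']
    by (intro integrable_lborel_pair_mult integrable_abs)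
      (simp_all add: locally_integrable_def set_integrable_def)
  show "(\<lambda>(x, t). deriv \<phi> x * (w t * prim_kernel x t)) \<in> borel_measurable (lborel \<Otimes>\<^sub>M lborel)"
    unfolding prim_kernel_def by measurable
  have "\<bar>deriv \<phi> x * (w t * prim_kernel x t)\<bar> \<le> \<bar>deriv \<phi> x\<bar> * \<bar>indicator {-R..R} t * w t\<bar>"
    for x t
  proof (cases "\<bar>x\<bar> \<le> R")
    case True
    then show ?thesis
      using mult_left_mono[OF abs_prim_kernel_le_indicator[OF True], of "\<bar>deriv \<phi> x\<bar> * \<bar>w t\<bar>" t]
      by (simp add: abs_mult ac_simps)
  next
    case False
    then have "deriv \<phi> x = 0" using \<phi>' by (auto simp: test_fun_in_def abs_real_def split: if_splits)
    then show ?thesis by simp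
  qed
  then show "AE p in lborel \<Otimes>\<^sub>M lborel. norm ((\<lambda>(x, t). deriv \<phi> x * (w t * prim_kernel x t)) p)
      \<le> norm ((\<lambda>(x, t). \<bar>deriv \<phi> x\<bar> * \<bar>indicator {-R..R} t * w t\<bar>) p)"
    by (auto split: prod.splits)
qed

text \<open>Fubini: \<open>\<integral> primitive w \<cdot> \<phi>' = \<integral>\<^sub>t w t \<integral>\<^sub>x \<phi>' x \<cdot> prim_kernel x t = - \<integral> w \<cdot> \<phi>\<close>.\<close>

lemma weak_deriv_primitive:
  assumes w: "locally_integrable w"
  shows "weak_deriv (primitive w) w"
  unfolding weak_deriv_def
proof (intro allI impI)
  fix \<phi> assume "test_fun \<phi>"
  then obtain R where \<phi>: "test_fun_in \<phi> (-R) R" using test_fun_imp_test_fun_in by blast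
  have \<phi>': "test_fun_in (deriv \<phi>) (-R) R" by (rule test_fun_in_deriv[OF \<phi>])
  have [measurable]: "w \<in> borel_measurable lborel" "deriv \<phi> \<in> borel_measurable lborel"
    "\<phi> \<in> borel_measurable lborel"
    using w \<phi> \<phi>' by (simp_all add: locally_integrable_def test_fun_in_def smooth_borel_measurable)
  define F where "F = (\<lambda>x t. deriv \<phi> x * (w t * prim_kernel x t))"
  have F_int: "integrable (lborel \<Otimes>\<^sub>M lborel) (\<lambda>(x, t). F x t)"
    unfolding F_def by (rule integrable_pair_deriv_mult_prim_kernel[OF \<phi> w])
  have "(\<integral>x. primitive w x * deriv \<phi> x \<partial>lborel) = (\<integral>x. (\<integral>t. F x t \<partial>lborel) \<partial>lborel)"
    by (simp add: F_def primitive_def mult.commute)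
  also have "\<dots> = (\<integral>t. (\<integral>x. F x t \<partial>lborel) \<partial>lborel)"
    using lborel_pair.Fubini_integral[OF F_int] by simp
  also have "\<dots> = (\<integral>t. - (w t * \<phi> t) \<partial>lborel)"
  proof (rule integral_cong_AE)
    have "(\<lambda>(t, x). F x t) \<in> borel_measurable (lborel \<Otimes>\<^sub>M lborel)"
      unfolding F_def prim_kernel_def by measurable
    then show "(\<lambda>t. \<integral>x. F x t \<partial>lborel) \<in> borel_measurable lborel"
      using lborel.borel_measurable_lebesgue_integral[of "\<lambda>t x. F x t"] by simp
    show "AE t in lborel. (\<integral>x. F x t \<partial>lborel) = - (w t * \<phi> t)"
      using AE_lborel_singleton[of 0]
    proof (rule eventually_mono)
      fix t :: real assume "t \<noteq> 0"
      have "(\<lambda>x. F x t) = (\<lambda>x. deriv \<phi> x * prim_kernel x t * w t)"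
        by (simp add: F_def algebra_simps)
      then show "(\<integral>x. F x t \<partial>lborel) = - (w t * \<phi> t)"
        using integral_deriv_mult_prim_kernel[OF \<phi> \<open>t \<noteq> 0\<close>] by simp
    qed
  qed simp
  finally show "(\<integral>x. primitive w x * deriv \<phi> x \<partial>lborel) = - (\<integral>x. w x * \<phi> x \<partial>lborel)"
    by simp
qed

section \<open>Boundedness of \<open>H\<^sup>1\<close> functions\<close>

lemma weak_deriv_imp_AE_eq_primitive:
  assumes u: "locally_integrable u" and w: "locally_integrable w" and "weak_deriv u w"
  shows "\<exists>c. AE x in lborel. u x = c + primitive w x"
proof -
  have prim: "locally_integrable (primitive w)" by (rule locally_integrable_primitive[OF w])
  define g where "g = (\<lambda>x. u x - primitive w x)"
  have "locally_integrable g"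
    using u prim by (auto simp: g_def locally_integrable_def)
  moreover have "weak_deriv g (\<lambda>_. 0)"
    unfolding weak_deriv_def
  proof (intro allI impI)
    fix \<phi> assume "test_fun \<phi>"
    then obtain R where \<phi>': "test_fun_in (deriv \<phi>) (-R) R"
      using test_fun_imp_test_fun_in test_fun_in_deriv by blast
    have "(\<integral>x. g x * deriv \<phi> x \<partial>lborel)
        = (\<integral>x. u x * deriv \<phi> x \<partial>lborel) - (\<integral>x. primitive w x * deriv \<phi> x \<partial>lborel)"
      using integrable_mult_test_fun_in[OF u \<phi>'] integrable_mult_test_fun_in[OF prim \<phi>']
      by (simp add: g_def left_diff_distrib)
    also have "\<dots> = 0"
      using \<open>weak_deriv u w\<close> weak_deriv_primitive[OF w] \<open>test_fun \<phi>\<close>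
      by (simp add: weak_deriv_def)
    finally show "(\<integral>x. g x * deriv \<phi> x \<partial>lborel) = - (\<integral>x. 0 * \<phi> x \<partial>lborel)" by simp
  qed
  ultimately obtain c where "AE x in lborel. g x = c"
    using weak_deriv_zero_imp_AE_const by blast
  then have "AE x in lborel. u x = c + primitive w x"
    by (rule eventually_mono) (simp add: g_def)
  then show ?thesis ..
qed

lemma Lp_2_iff: "f \<in> Lp 2 \<longleftrightarrow> f \<in> borel_measurable lborel \<and> integrable lborel (\<lambda>x. (f x)\<^sup>2)"
proof -
  have "\<bar>y\<bar> powr 2 = y\<^sup>2" for y :: real by simp
  then show ?thesis by (simp add: Lp_def)
qed

lemma integral_indicator_mult_abs_le:
  fixes f :: "real \<Rightarrow> real"
  assumes f: "f \<in> Lp 2" and "a \<le> b"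
  shows "integrable lborel (\<lambda>x. indicator {a..b} x * f x)"
    and "(\<integral>x. indicator {a..b} x * \<bar>f x\<bar> \<partial>lborel) \<le> (b - a + (\<integral>x. (f x)\<^sup>2 \<partial>lborel)) / 2"
proof -
  have [measurable]: "f \<in> borel_measurable lborel" and f2: "integrable lborel (\<lambda>x. (f x)\<^sup>2)"
    using f by (simp_all add: Lp_2_iff)
  have bound: "indicator {a..b} x * \<bar>f x\<bar> \<le> (indicator {a..b} x + (f x)\<^sup>2) / 2" for x
    using sum_squares_bound[of 1 "\<bar>f x\<bar>"] by (auto simp: indicator_def)
  have majorant: "integrable lborel (\<lambda>x. (indicator {a..b} x + (f x)\<^sup>2) / 2)"
    using integrable_indicator_Icc f2 by simp
  show int: "integrable lborel (\<lambda>x. indicator {a..b} x * f x)"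
    by (rule Bochner_Integration.integrable_bound[OF majorant])
      (use bound in \<open>auto simp: abs_mult\<close>)
  have "(\<integral>x. indicator {a..b} x * \<bar>f x\<bar> \<partial>lborel) \<le> (\<integral>x. (indicator {a..b} x + (f x)\<^sup>2) / 2 \<partial>lborel)"
    using integrable_abs[OF int] majorant bound by (intro integral_mono) (simp_all add: abs_mult)
  also have "\<dots> = (b - a + (\<integral>x. (f x)\<^sup>2 \<partial>lborel)) / 2"
    using integrable_indicator_Icc[of a b] f2 \<open>a \<le> b\<close> by simp
  finally show "(\<integral>x. indicator {a..b} x * \<bar>f x\<bar> \<partial>lborel) \<le> (b - a + (\<integral>x. (f x)\<^sup>2 \<partial>lborel)) / 2" .
qed

lemma Lp_2_locally_integrable: "f \<in> Lp 2 \<Longrightarrow> locally_integrable f"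
proof -
  assume f: "f \<in> Lp 2"
  have "set_integrable lborel {a..b} f" for a b
  proof (cases "a \<le> b")
    case True
    then show ?thesis
      using integral_indicator_mult_abs_le(1)[OF f] by (simp add: set_integrable_def)
  qed (simp add: set_integrable_def)
  with f show ?thesis by (simp add: locally_integrable_def Lp_2_iff)
qed

text \<open>Where \<open>u = c + primitive w\<close>, the value \<open>u x\<close> differs from every \<open>u y\<close>, \<open>y \<in> [x, x + 1]\<close>,
  by at most \<open>\<integral>\<^bsub>[x, x+1]\<^esub> \<bar>w\<bar>\<close>; now average over \<open>y\<close>.\<close>

lemma abs_le_local_average_if_AE_eq_primitive:
  assumes u: "locally_integrable u" and w: "locally_integrable w"
    and ae: "AE y in lborel. u y = c + primitive w y" and ux: "u x = c + primitive w x"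
  shows "\<bar>u x\<bar> \<le> (\<integral>y. indicator {x..x+1} y * \<bar>u y\<bar> \<partial>lborel)
    + (\<integral>t. indicator {x..x+1} t * \<bar>w t\<bar> \<partial>lborel)"
proof -
  define W where "W = (\<integral>t. indicator {x..x+1} t * \<bar>w t\<bar> \<partial>lborel)"
  have "\<bar>u x\<bar> \<le> \<bar>u y\<bar> + W" if "y \<in> {x..x+1}" and uy: "u y = c + primitive w y" for y
  proof -
    have "\<bar>u x\<bar> \<le> \<bar>u y\<bar> + \<bar>primitive w y - primitive w x\<bar>" using ux uy by linarith
    also have "\<bar>primitive w y - primitive w x\<bar> \<le> (\<integral>t. indicator {x..y} t * \<bar>w t\<bar> \<partial>lborel)"
      using abs_primitive_diff_le[OF w] that by simp
    also have "\<dots> \<le> W"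
      unfolding W_def using that locally_integrable_integrable_indicator_abs[OF w]
      by (intro integral_mono) (auto simp: indicator_def)
    finally show ?thesis by simp
  qed
  then have "indicator {x..x+1} y * \<bar>u x\<bar> \<le> indicator {x..x+1} y * (\<bar>u y\<bar> + W)"
    if "u y = c + primitive w y" for y
    using that by (cases "y \<in> {x..x+1}") auto
  then have "AE y in lborel. indicator {x..x+1} y * \<bar>u x\<bar> \<le> indicator {x..x+1} y * (\<bar>u y\<bar> + W)"
    using ae by (rule eventually_mono[rotated])
  then have "(\<integral>y. indicator {x..x+1} y * \<bar>u x\<bar> \<partial>lborel)
      \<le> (\<integral>y. indicator {x..x+1} y * (\<bar>u y\<bar> + W) \<partial>lborel)"
    using locally_integrable_integrable_indicator_abs[OF u, of x "x+1"]
      integrable_indicator_Icc[of x "x+1"]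
    by (intro integral_mono_AE) (simp_all add: distrib_left)
  then show ?thesis
    using locally_integrable_integrable_indicator_abs[OF u, of x "x+1"]
      integrable_indicator_Icc[of x "x+1"]
    by (simp add: W_def distrib_left measure_lborel_Icc)
qed

lemma weak_deriv_Lp_2_AE_abs_le:
  assumes u: "u \<in> Lp 2" and w: "w \<in> Lp 2" and "weak_deriv u w"
  shows "AE x in lborel. \<bar>u x\<bar> \<le> 1 + ((\<integral>x. (u x)\<^sup>2 \<partial>lborel) + (\<integral>x. (w x)\<^sup>2 \<partial>lborel)) / 2"
proof -
  have loc: "locally_integrable u" "locally_integrable w"
    using u w by (simp_all add: Lp_2_locally_integrable)
  obtain c where ae: "AE x in lborel. u x = c + primitive w x"
    using weak_deriv_imp_AE_eq_primitive[OF loc \<open>weak_deriv u w\<close>] by blast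
  have bound: "\<bar>u x\<bar> \<le> 1 + ((\<integral>x. (u x)\<^sup>2 \<partial>lborel) + (\<integral>x. (w x)\<^sup>2 \<partial>lborel)) / 2"
    if "u x = c + primitive w x" for x
    using abs_le_local_average_if_AE_eq_primitive[OF loc ae that]
      integral_indicator_mult_abs_le(2)[OF u, of x "x+1"]
      integral_indicator_mult_abs_le(2)[OF w, of x "x+1"]
    by (simp add: add_divide_distrib)
  show ?thesis
    using ae by (rule eventually_mono) (rule bound)
qed

section \<open>The lower bound\<close>

lemma integral_mult_square_ge:
  fixes u v :: "real \<Rightarrow> real"
  assumes u: "integrable lborel (\<lambda>x. (u x)\<^sup>2)" and v: "integrable lborel (\<lambda>x. (v x)\<^sup>2)"
    and "0 \<le> M" and u_le: "AE x in lborel. \<bar>u x\<bar> \<le> M"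
  shows "(\<integral>x. v x * (u x)\<^sup>2 \<partial>lborel)
    \<ge> - (M / 2) * ((\<integral>x. (v x)\<^sup>2 \<partial>lborel) + (\<integral>x. (u x)\<^sup>2 \<partial>lborel))"
proof (cases "integrable lborel (\<lambda>x. v x * (u x)\<^sup>2)")
  case True
  have pointwise: "\<bar>v x * (u x)\<^sup>2\<bar> \<le> (M / 2) * ((v x)\<^sup>2 + (u x)\<^sup>2)" if "\<bar>u x\<bar> \<le> M" for x
  proof -
    have "\<bar>v x * (u x)\<^sup>2\<bar> = (\<bar>v x\<bar> * \<bar>u x\<bar>) * \<bar>u x\<bar>" by (simp add: abs_mult power2_eq_square)
    also have "\<dots> \<le> ((v x)\<^sup>2 + (u x)\<^sup>2) / 2 * M"
      using sum_squares_bound[of "\<bar>v x\<bar>" "\<bar>u x\<bar>"] that \<open>0 \<le> M\<close>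
      by (intro mult_mono) (auto simp: field_simps)
    finally show ?thesis by (simp add: field_simps)
  qed
  have "AE x in lborel. - (M / 2) * ((v x)\<^sup>2 + (u x)\<^sup>2) \<le> v x * (u x)\<^sup>2"
    using u_le
  proof (rule eventually_mono)
    show "- (M / 2) * ((v x)\<^sup>2 + (u x)\<^sup>2) \<le> v x * (u x)\<^sup>2" if "\<bar>u x\<bar> \<le> M" for x
      using pointwise[OF that] by linarith
  qed
  then have "(\<integral>x. - (M / 2) * ((v x)\<^sup>2 + (u x)\<^sup>2) \<partial>lborel) \<le> (\<integral>x. v x * (u x)\<^sup>2 \<partial>lborel)"
    using u v True by (intro integral_mono_AE) auto
  then show ?thesis using u v by simp
next
  case False
  \<comment> \<open>the Bochner integral of a non-integrable function is \<open>0\<close>\<close>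
  then show ?thesis using \<open>0 \<le> M\<close> by (simp add: not_integrable_integral_eq)
qed

lemma tau_ge:
  fixes p a \<gamma> \<mu> d :: real
  assumes "p > -2" "a \<ge> 0" "\<gamma> \<ge> 0" "d > 0" and "(u, v) \<in> Xset p \<mu> d"
  shows "tau a p \<gamma> u v \<ge> - ((1 + \<mu>) / 2) * (\<mu> / d + \<mu>)"
proof -
  obtain w where u: "u \<in> Lp 2" and v: "v \<in> Lp 2" and w: "w \<in> Lp 2" and "weak_deriv u w"
    and N: "Lnorm2sq u + Lnorm2sq w + d * Lnorm2sq v = \<mu>"
    using assms(5) by (auto simp: Xset_def H1_def)
  have "Lnorm2sq u \<ge> 0" "Lnorm2sq w \<ge> 0" "Lnorm2sq v \<ge> 0"
    by (simp_all add: Lnorm2sq_def)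
  then have bounds: "Lnorm2sq u \<le> \<mu>" "Lnorm2sq w \<le> \<mu>" "Lnorm2sq v \<le> \<mu> / d"
    and "Lnorm2sq u \<ge> 0" "Lnorm2sq v \<ge> 0"
    using N \<open>d > 0\<close> by (auto simp: field_simps)
  define M where "M = 1 + (Lnorm2sq u + Lnorm2sq w) / 2"
  have "0 \<le> M" "M \<le> 1 + \<mu>"
    using bounds \<open>Lnorm2sq u \<ge> 0\<close> \<open>Lnorm2sq w \<ge> 0\<close> by (auto simp: M_def)
  have "AE x in lborel. \<bar>u x\<bar> \<le> M"
    using weak_deriv_Lp_2_AE_abs_le[OF u w \<open>weak_deriv u w\<close>] by (simp add: M_def Lnorm2sq_def)
  then have "(\<integral>x. v x * (u x)\<^sup>2 \<partial>lborel) \<ge> - (M / 2) * (Lnorm2sq v + Lnorm2sq u)"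
    using integral_mult_square_ge[of u v M] u v \<open>0 \<le> M\<close>
    by (simp add: Lp_2_iff Lnorm2sq_def)
  moreover have "(M / 2) * (Lnorm2sq v + Lnorm2sq u) \<le> ((1 + \<mu>) / 2) * (\<mu> / d + \<mu>)"
    using bounds \<open>0 \<le> M\<close> \<open>M \<le> 1 + \<mu>\<close> \<open>Lnorm2sq u \<ge> 0\<close> \<open>Lnorm2sq v \<ge> 0\<close>
    by (intro mult_mono) auto
  moreover have "0 \<le> 2 * a / (p + 2) * (\<integral>x. \<bar>u x\<bar> powr (p + 2) \<partial>lborel)"
    using assms(1,2) by (intro mult_nonneg_nonneg divide_nonneg_pos integral_nonneg_AE) auto
  moreover have "0 \<le> \<gamma> / 4 * (\<integral>x. (v x) ^ 4 \<partial>lborel)"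
    using assms(3) by (intro mult_nonneg_nonneg integral_nonneg_AE) (auto simp: zero_le_even_power)
  ultimately show ?thesis unfolding tau_def by linarith
qed

theorem proposition1:
  fixes p a \<gamma> \<mu> d :: real
  assumes "-1 < p" "p < 0" "a > 0" "\<gamma> > 0" "\<mu> > 0" "d > 0"
  shows "Imin a p \<gamma> \<mu> d > -\<infinity>"
proof -
  have "ereal (- ((1 + \<mu>) / 2) * (\<mu> / d + \<mu>)) \<le> Imin a p \<gamma> \<mu> d"
    unfolding Imin_def using assms tau_ge[of p a \<gamma> d] by (auto intro!: INF_greatest)
  then show ?thesis by (metis MInfty_neq_ereal(1) ereal_infty_less(2) order_less_le_trans)
qed

end
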